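(* Let $p$ be a prime and $n,r\geq 0$ integers. Then $B_{n+p^r,-r}\equiv B_{n,-r+1}\pmod p$.
   Context: For any integer $s\in\mathbb{Z}$, the $s$-Bell numbers $B_{n,s}$ ($n\geq0$) are defined by $\sum_{n\geq0}B_{n,s}\frac{t^n}{n!}=e^{e^t-1+st}$. *)

theory Defs
  imports "HOL-Computational_Algebra.Formal_Power_Series"
begin

definition sbell_egf :: "int \<Rightarrow> rat fps" where
  "sbell_egf s = fps_exp 1 oo (fps_exp 1 - 1 + fps_const (of_int s) * fps_X)"

definition sbell :: "nat \<Rightarrow> int \<Rightarrow> rat" where
  "sbell n s = fact n * fps_nth (sbell_egf s) n"

end

(* Let L be the linear functional on Z[x] with L(x^n) = B_{n,s}.  The egf identity
   e^(e^t - 1 + (s+1)t) = e^t e^(e^t - 1 + st) and the differential equation of the egf give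
   B_{n,s+1} = sum_k C(n,k) B_{k,s} = B_{n+1,s} - s B_{n,s}, i.e. L((x - s) f(x)) = L(f(x + 1)).
   Iterating, L((x - s)(x - s - 1)...(x - s - p + 1) f(x)) = L(f(x + p)), which is L(f) mod p.
   Modulo p the falling factorial x(x - 1)...(x - p + 1) is x^p - x (it has the p roots 0, ..., p-1),
   and (x - s)^p - (x - s) is x^p - x, so x^p behaves like x + 1 under L mod p (Touchard's
   congruence), hence x^(p^r) like x + r.  For s = -r:
   B_{n+p^r,s} = L(x^(p^r) x^n) = L((x - s) x^n) = L((x + 1)^n) = B_{n,s+1} (mod p). *)

theory Submission
  imports Defs "HOL-Computational_Algebra.Polynomial"
begin

unbundle fps_syntax

lemma fps_deriv_eq_mult_unique:
  fixes f g h :: "'a::field_char_0 fps"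
  assumes "fps_deriv f = f * h" "fps_deriv g = g * h" "f $ 0 = g $ 0"
  shows "f = g"
proof (rule fps_ext)
  fix n show "f $ n = g $ n"
  proof (induction n rule: less_induct)
    case (less n)
    show ?case
    proof (cases n)
      case (Suc m)
      have "of_nat (Suc m) * f $ Suc m = (f * h) $ m"
        using fps_deriv_nth[of f m] by (simp add: assms(1))
      also have "\<dots> = (g * h) $ m"
        unfolding fps_mult_nth using less Suc by (intro sum.cong) auto
      also have "\<dots> = of_nat (Suc m) * g $ Suc m"
        using fps_deriv_nth[of g m] by (simp add: assms(2))
      finally show ?thesis
        using Suc by (simp add: of_nat_neq_0 del: of_nat_Suc)
    qed (use assms(3) in simp)
  qed
qed

lemma fact_mult_nth_mult_fps_exp:
  fixes F :: "'a::field_char_0 fps"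
  shows "fact n * (F * fps_exp 1) $ n = (\<Sum>k\<le>n. of_nat (n choose k) * (fact k * F $ k))"
  unfolding fps_mult_nth atLeast0AtMost sum_distrib_left
proof (rule sum.cong)
  fix k assume "k \<in> {..n}"
  then show "fact n * (F $ k * fps_exp 1 $ (n - k)) = of_nat (n choose k) * (fact k * F $ k)"
    using fact_binomial[of k n, where 'a='a] by (simp add: field_simps)
qed simp

lemma sbell_egf_deriv:
  "fps_deriv (sbell_egf s) = sbell_egf s * (fps_exp 1 + fps_const (of_int s))"
  unfolding sbell_egf_def by (subst fps_compose_deriv) simp_all

lemma sbell_egf_nth_0: "sbell_egf s $ 0 = 1"
  by (simp add: sbell_egf_def)

lemma sbell_egf_param_plus_one: "sbell_egf (s + 1) = sbell_egf s * fps_exp 1"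
proof (rule fps_deriv_eq_mult_unique)
  show "fps_deriv (sbell_egf (s + 1)) = sbell_egf (s + 1) * (fps_exp 1 + fps_const (of_int s + 1))"
    using sbell_egf_deriv[of "s + 1"] by simp
  show "fps_deriv (sbell_egf s * fps_exp 1) = sbell_egf s * fps_exp 1 * (fps_exp 1 + fps_const (of_int s + 1))"
    by (simp add: sbell_egf_deriv algebra_simps fps_const_add[symmetric])
qed (simp add: sbell_egf_nth_0)

lemma sbell_0 [simp]: "sbell 0 s = 1"
  by (simp add: sbell_def sbell_egf_nth_0)

lemma sbell_param_plus_one: "sbell n (s + 1) = (\<Sum>k\<le>n. of_nat (n choose k) * sbell k s)"
  unfolding sbell_def sbell_egf_param_plus_one fact_mult_nth_mult_fps_exp ..

lemma sbell_Suc: "sbell (Suc n) s = (\<Sum>k\<le>n. of_nat (n choose k) * sbell k s) + of_int s * sbell n s"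
proof -
  have "sbell (Suc n) s = fact n * fps_deriv (sbell_egf s) $ n"
    by (simp add: sbell_def algebra_simps)
  also have "\<dots> = fact n * (sbell_egf s * fps_exp 1) $ n + of_int s * sbell n s"
    by (simp add: sbell_egf_deriv distrib_left sbell_def)
  finally show ?thesis
    unfolding fact_mult_nth_mult_fps_exp sbell_def .
qed

lemma sbell_in_Ints: "sbell n s \<in> \<int>"
proof (induction n rule: less_induct)
  case (less n)
  then show ?case
    by (cases n) (auto simp: sbell_Suc intro!: Ints_sum Ints_add Ints_mult)
qed

definition sbell_int :: "int \<Rightarrow> nat \<Rightarrow> int" where
  "sbell_int s n = \<lfloor>sbell n s\<rfloor>"

lemma of_int_sbell_int: "of_int (sbell_int s n) = sbell n s"
  unfolding sbell_int_def using sbell_in_Ints by (metis Ints_cases floor_of_int)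

lemma sbell_int_param_plus_one: "sbell_int (s + 1) n = (\<Sum>k\<le>n. int (n choose k) * sbell_int s k)"
proof -
  have "(of_int (sbell_int (s + 1) n) :: rat) = of_int (\<Sum>k\<le>n. int (n choose k) * sbell_int s k)"
    by (simp add: of_int_sbell_int sbell_param_plus_one)
  then show ?thesis
    by (simp only: of_int_eq_iff)
qed

lemma sbell_int_Suc: "sbell_int s (Suc n) = sbell_int (s + 1) n + s * sbell_int s n"
proof -
  have "(of_int (sbell_int s (Suc n)) :: rat) = of_int (sbell_int (s + 1) n + s * sbell_int s n)"
    by (simp add: of_int_sbell_int sbell_param_plus_one sbell_Suc)
  then show ?thesis
    by (simp only: of_int_eq_iff)
qed

definition umbral :: "(nat \<Rightarrow> 'a::comm_semiring_0) \<Rightarrow> 'a poly \<Rightarrow> 'a" where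
  "umbral a f = (\<Sum>j\<le>degree f. coeff f j * a j)"

lemma umbral_eq_sum: "degree f \<le> N \<Longrightarrow> umbral a f = (\<Sum>j\<le>N. coeff f j * a j)"
  unfolding umbral_def by (rule sum.mono_neutral_left) (auto simp: coeff_eq_0)

lemma umbral_add: "umbral a (f + g) = umbral a f + umbral a g"
  using umbral_eq_sum[of "f + g" "max (degree f) (degree g)"]
    umbral_eq_sum[of f "max (degree f) (degree g)"] umbral_eq_sum[of g "max (degree f) (degree g)"]
  by (simp add: degree_add_le sum.distrib algebra_simps)

lemma umbral_smult: "umbral a (smult c f) = c * umbral a f"
  by (subst umbral_eq_sum[OF degree_smult_le]) (simp add: umbral_def sum_distrib_left ac_simps)

lemma umbral_0 [simp]: "umbral a 0 = 0"
  by (simp add: umbral_def)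

lemma umbral_diff: "umbral a (f - g) = umbral a f - umbral (a :: nat \<Rightarrow> 'a::comm_ring) g"
  using umbral_add[of a "f - g" g] by simp

lemma umbral_sum: "umbral a (\<Sum>i\<in>A. f i) = (\<Sum>i\<in>A. umbral a (f i))"
  by (induction A rule: infinite_finite_induct) (auto simp: umbral_add)

lemma umbral_monom: "umbral a (monom c n) = c * a n"
proof -
  have "(\<Sum>j\<le>n. coeff (monom c n) j * a j) = (\<Sum>j\<le>n. if j = n then c * a j else 0)"
    by (intro sum.cong) (auto simp: coeff_monom)
  then show ?thesis
    by (simp add: umbral_eq_sum[OF degree_monom_le])
qed

lemma umbral_X_power: "umbral a ([:0, 1:] ^ n) = a (n :: nat)"
  using umbral_monom[of a 1 n] by (simp add: monom_altdef)

lemma umbral_linear_power: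
  "umbral a ([:1, 1:] ^ n) = (\<Sum>k\<le>n. of_nat (n choose k) * (a k :: 'a::comm_semiring_1))"
  by (simp add: umbral_def degree_linear_power coeff_linear_poly_power)

lemma pcompose_idL: "pcompose [:0, 1:] (q :: 'a::comm_semiring_1 poly) = q"
  by (simp add: pcompose_pCons)

lemma pcompose_power: "pcompose (f ^ n) q = pcompose f q ^ n"
  by (induction n) (simp_all add: pcompose_mult pcompose_1)

lemma pcompose_diff_dvd: "q - r dvd pcompose f q - pcompose (f :: 'a::comm_ring_1 poly) r"
proof (induction f rule: pCons_induct)
  case (pCons c f)
  have "pcompose (pCons c f) q - pcompose (pCons c f) r
        = q * (pcompose f q - pcompose f r) + (q - r) * pcompose f r"
    by (simp add: pcompose_pCons algebra_simps)
  then show ?case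
    using pCons.IH by simp
qed simp

lemma umbral_sbell_int_linear_power: "umbral (sbell_int s) ([:1, 1:] ^ n) = sbell_int (s + 1) n"
  by (simp add: umbral_linear_power sbell_int_param_plus_one)

lemma umbral_sbell_int_shift_X_power:
  "umbral (sbell_int s) ([:-s, 1:] * [:0, 1:] ^ n) = sbell_int (s + 1) n"
proof -
  have "[:-s, 1:] * [:0, 1:] ^ n = [:0, 1:] ^ Suc n - smult s ([:0, 1:] ^ n)"
    by (simp add: mult_pCons_left algebra_simps)
  then show ?thesis
    by (simp only: umbral_diff umbral_smult umbral_X_power) (simp add: sbell_int_Suc)
qed

lemma umbral_sbell_int_shift:
  "umbral (sbell_int s) ([:-s, 1:] * f) = umbral (sbell_int s) (pcompose f [:1, 1:])"
proof -
  define N where "N = degree f"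
  have f: "f = (\<Sum>i\<le>N. smult (coeff f i) ([:0, 1:] ^ i))"
    using poly_as_sum_of_monoms[of f] by (simp add: monom_altdef N_def)
  have "umbral (sbell_int s) ([:-s, 1:] * f)
        = (\<Sum>i\<le>N. coeff f i * umbral (sbell_int s) ([:-s, 1:] * [:0, 1:] ^ i))"
    by (subst f) (simp add: sum_distrib_left umbral_sum umbral_smult)
  also have "\<dots> = (\<Sum>i\<le>N. coeff f i * umbral (sbell_int s) ([:1, 1:] ^ i))"
    by (simp only: umbral_sbell_int_shift_X_power umbral_sbell_int_linear_power)
  also have "\<dots> = umbral (sbell_int s) (pcompose f [:1, 1:])"
    by (subst (2) f) (simp add: pcompose_sum pcompose_smult pcompose_power pcompose_idL
        umbral_sum umbral_smult)
  finally show ?thesis .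
qed

lemma umbral_sbell_int_falling:
  "umbral (sbell_int s) ((\<Prod>i<k. [:-s - int i, 1:]) * f) = umbral (sbell_int s) (pcompose f [:int k, 1:])"
proof (induction k arbitrary: f)
  case (Suc k)
  have "umbral (sbell_int s) ((\<Prod>i<Suc k. [:-s - int i, 1:]) * f)
        = umbral (sbell_int s) (pcompose ([:-s - int k, 1:] * f) [:int k, 1:])"
    unfolding prod.lessThan_Suc mult.assoc by (rule Suc.IH)
  also have "pcompose ([:-s - int k, 1:] * f) [:int k, 1:] = [:-s, 1:] * pcompose f [:int k, 1:]"
    by (simp only: pcompose_mult) (simp add: pcompose_pCons)
  also have "umbral (sbell_int s) \<dots> = umbral (sbell_int s) (pcompose f [:int (Suc k), 1:])"
    by (simp only: umbral_sbell_int_shift pcompose_assoc[symmetric]) (simp add: pcompose_pCons add.commute)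
  finally show ?case .
qed simp

lemma prime_dvd_add_power_diff:
  fixes x y :: "'a::comm_ring_1"
  assumes "prime p"
  shows "of_nat p dvd (x + y) ^ p - (x ^ p + y ^ p)"
proof -
  have "p \<noteq> 0"
    using assms by auto
  let ?t = "\<lambda>k. of_nat (p choose k) * x ^ k * y ^ (p - k)"
  have "(x + y) ^ p = (\<Sum>k\<in>{..p} - {0, p}. ?t k) + (\<Sum>k\<in>{0, p}. ?t k)"
    unfolding binomial_ring by (rule sum.subset_diff) auto
  moreover have "(\<Sum>k\<in>{0, p}. ?t k) = x ^ p + y ^ p"
    using \<open>p \<noteq> 0\<close> by simp
  moreover have "of_nat p dvd (\<Sum>k\<in>{..p} - {0, p}. ?t k)"
  proof (rule dvd_sum)
    fix k assume "k \<in> {..p} - {0, p}"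
    then have "p dvd p choose k"
      using assms by (intro dvd_choose_prime) auto
    then show "of_nat p dvd ?t k"
      by (elim dvdE) (simp add: mult.assoc)
  qed
  ultimately show ?thesis
    by simp
qed

lemma prime_dvd_power_diff_self:
  fixes a :: int
  assumes "prime p"
  shows "int p dvd a ^ p - a"
proof -
  have nat_case: "int p dvd int m ^ p - int m" for m
  proof (induction m)
    case (Suc m)
    have "int (Suc m) ^ p - int (Suc m) = ((int m + 1) ^ p - (int m ^ p + 1)) + (int m ^ p - int m)"
      by (simp add: add.commute)
    moreover have "int p dvd (int m + 1) ^ p - (int m ^ p + 1)"
      using prime_dvd_add_power_diff[OF assms, of "int m" 1] by simp
    ultimately show ?case
      using Suc.IH by (simp only: dvd_add)
  qed (use assms in \<open>simp add: prime_gt_0_nat zero_power\<close>)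
  have "0 \<le> a mod int p"
    using assms by (simp add: prime_gt_0_nat)
  then obtain m where m: "a mod int p = int m"
    using nonneg_int_cases by blast
  have "a ^ p mod int p = int m ^ p mod int p"
    by (metis m power_mod)
  also have "\<dots> = int m mod int p"
    using nat_case by (simp add: mod_eq_dvd_iff)
  also have "\<dots> = a mod int p"
    by (simp add: m[symmetric])
  finally show ?thesis
    by (simp add: mod_eq_dvd_iff)
qed

lemma prime_dvd_poly_power_add_const:
  fixes f :: "int poly"
  assumes "prime p"
  shows "[:int p:] dvd (f + [:c:]) ^ p - (f ^ p + [:c:])"
proof -
  have "[:c:] ^ p - [:c:] = [:c ^ p - c:]"
    by (simp add: poly_const_pow)
  then have "[:int p:] dvd [:c:] ^ p - [:c:]"
    using prime_dvd_power_diff_self[OF assms] by simp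
  moreover have "[:int p:] dvd (f + [:c:]) ^ p - (f ^ p + [:c:] ^ p)"
    using prime_dvd_add_power_diff[OF assms] by (metis of_nat_poly of_int_of_nat_eq)
  ultimately have "[:int p:] dvd ((f + [:c:]) ^ p - (f ^ p + [:c:] ^ p)) + ([:c:] ^ p - [:c:])"
    by (rule dvd_add[rotated])
  moreover have "((f + [:c:]) ^ p - (f ^ p + [:c:] ^ p)) + ([:c:] ^ p - [:c:])
      = (f + [:c:]) ^ p - (f ^ p + [:c:])"
    by algebra
  ultimately show ?thesis
    by simp
qed

lemma prime_const_poly_dvd_if_roots:
  fixes g :: "int poly"
  assumes "prime p" "A \<subseteq> {0..<int p}" "degree g < card A" "\<And>a. a \<in> A \<Longrightarrow> int p dvd poly g a"
  shows "[:int p:] dvd g"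
proof -
  have "finite A"
    using assms(2) finite_subset by blast
  then show ?thesis
    using assms(2-4)
  proof (induction A arbitrary: g rule: finite_induct)
    case (insert a A)
    define q where "q = synthetic_div g a"
    have g: "g = [:-a, 1:] * q + [:poly g a:]"
      unfolding q_def by (rule synthetic_div_correct'[symmetric])
    have "[:int p:] dvd q"
    proof (cases "degree g = 0")
      case False
      have "int p dvd poly q b" if "b \<in> A" for b
      proof -
        have "poly g b = (b - a) * poly q b + poly g a"
          by (subst g) (simp add: algebra_simps)
        then have "int p dvd (b - a) * poly q b"
          using insert.prems(3) \<open>b \<in> A\<close> by (metis add_diff_cancel_right' dvd_diff insertCI)
        moreover have "\<not> int p dvd b - a"
          using insert.hyps(2) insert.prems(1) \<open>b \<in> A\<close>
          by (auto simp flip: mod_eq_dvd_iff)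
        ultimately show ?thesis
          using assms(1) by (simp add: prime_dvd_mult_iff)
      qed
      moreover have "degree q < card A"
        using False insert.hyps insert.prems(2) by (simp add: q_def degree_synthetic_div)
      ultimately show ?thesis
        using insert.IH insert.prems(1) by blast
    qed (simp add: q_def iffD2[OF synthetic_div_eq_0_iff])
    moreover have "[:int p:] dvd [:poly g a:]"
      using insert.prems(3) by simp
    ultimately show ?case
      by (subst g) (intro dvd_add dvd_mult)
  qed simp
qed

lemma falling_poly_cong_mod_prime:
  assumes "prime p"
  shows "[:int p:] dvd (\<Prod>i<p. [:- int i, 1:]) - ([:0, 1:] ^ p - [:0, 1:])"
proof (rule prime_const_poly_dvd_if_roots[OF assms order_refl])
  let ?P = "\<Prod>i<p. [:- int i, 1:] :: int poly"
  have "p \<ge> 2"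
    using assms prime_ge_2_nat by blast
  have "degree ?P = p"
    by (simp add: degree_prod_eq_sum_degree)
  moreover have "coeff ?P p = 1"
    using lead_coeff_prod[of "\<lambda>i. [:- int i, 1:]" "{..<p}"] \<open>degree ?P = p\<close> by simp
  moreover have "coeff ([:0, 1:] ^ p - [:0, 1:] :: int poly) p = 1"
    using \<open>p \<ge> 2\<close> by (simp add: coeff_linear_poly_power coeff_eq_0)
  moreover have "degree ([:0, 1:] ^ p - [:0, 1:] :: int poly) \<le> p"
    using \<open>p \<ge> 2\<close> by (intro degree_diff_le) (simp_all add: degree_linear_power)
  ultimately have "degree (?P - ([:0, 1:] ^ p - [:0, 1:])) \<le> p"
    and "coeff (?P - ([:0, 1:] ^ p - [:0, 1:])) p = 0"
    by (simp_all add: degree_diff_le)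
  then show "degree (?P - ([:0, 1:] ^ p - [:0, 1:])) < card {0..<int p}"
    using eq_zero_or_degree_less \<open>p \<ge> 2\<close> by fastforce
next
  fix a assume "a \<in> {0..<int p}"
  then have "poly (\<Prod>i<p. [:- int i, 1:]) a = 0"
    by (auto simp: poly_prod prod_zero_iff intro!: bexI[of _ "nat a"])
  then show "int p dvd poly ((\<Prod>i<p. [:- int i, 1:]) - ([:0, 1:] ^ p - [:0, 1:])) a"
    using prime_dvd_power_diff_self[OF assms, of a] by (simp add: dvd_diff_commute)
qed

(* Congruence modulo the ideal of all f with m dvd umbral a (f * h) for every h: unlike congruence
   of the values umbral a f, it is compatible with multiplication. *)
definition umbral_cong :: "int \<Rightarrow> (nat \<Rightarrow> int) \<Rightarrow> int poly \<Rightarrow> int poly \<Rightarrow> bool" where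
  "umbral_cong m a f g \<longleftrightarrow> (\<forall>h. m dvd umbral a ((f - g) * h))"

lemma umbral_cong_refl: "umbral_cong m a f f"
  by (simp add: umbral_cong_def)

lemma umbral_cong_sym: "umbral_cong m a f g \<Longrightarrow> umbral_cong m a g f"
  unfolding umbral_cong_def
proof (intro allI)
  fix h assume "\<forall>h. m dvd umbral a ((f - g) * h)"
  moreover have "(g - f) * h = 0 - (f - g) * h"
    by (simp add: algebra_simps)
  ultimately show "m dvd umbral a ((g - f) * h)"
    by (simp only: umbral_diff umbral_0) simp
qed

lemma umbral_cong_trans [trans]: "umbral_cong m a f g \<Longrightarrow> umbral_cong m a g k \<Longrightarrow> umbral_cong m a f k"
  unfolding umbral_cong_def
proof (intro allI)
  fix h assume "\<forall>h. m dvd umbral a ((f - g) * h)" "\<forall>h. m dvd umbral a ((g - k) * h)"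
  then have "m dvd umbral a ((f - g) * h + (g - k) * h)"
    by (simp add: umbral_add)
  then show "m dvd umbral a ((f - k) * h)"
    by (simp add: algebra_simps)
qed

lemma umbral_cong_add:
  "umbral_cong m a f g \<Longrightarrow> umbral_cong m a f' g' \<Longrightarrow> umbral_cong m a (f + f') (g + g')"
  unfolding umbral_cong_def
proof (intro allI)
  fix h assume "\<forall>h. m dvd umbral a ((f - g) * h)" "\<forall>h. m dvd umbral a ((f' - g') * h)"
  then have "m dvd umbral a ((f - g) * h + (f' - g') * h)"
    by (simp add: umbral_add)
  then show "m dvd umbral a ((f + f' - (g + g')) * h)"
    by (simp add: algebra_simps)
qed

lemma umbral_cong_mult_right: "umbral_cong m a f g \<Longrightarrow> umbral_cong m a (f * k) (g * k)"
  unfolding umbral_cong_def by (metis left_diff_distrib mult.assoc)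

lemma umbral_cong_mult:
  assumes "umbral_cong m a f g" "umbral_cong m a f' g'"
  shows "umbral_cong m a (f * f') (g * g')"
proof (rule umbral_cong_trans)
  show "umbral_cong m a (f * f') (g * f')"
    using assms(1) by (rule umbral_cong_mult_right)
  show "umbral_cong m a (g * f') (g * g')"
    using umbral_cong_mult_right[OF assms(2), of g] by (simp add: mult.commute)
qed

lemma umbral_cong_power: "umbral_cong m a f g \<Longrightarrow> umbral_cong m a (f ^ n) (g ^ n)"
  by (induction n) (simp_all add: umbral_cong_refl umbral_cong_mult)

lemma umbral_cong_if_dvd: "[:m:] dvd f - g \<Longrightarrow> umbral_cong m a f g"
  unfolding umbral_cong_def by (auto elim!: dvdE simp: mult.assoc umbral_smult)

lemma umbral_sbell_int_touchard:
  assumes "prime p"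
  shows "umbral_cong p (sbell_int s) ([:0, 1:] ^ p) ([:0, 1:] + 1)"
proof -
  define X Y F where "X = ([:0, 1:] :: int poly)" and "Y = [:- s, 1:]"
    and "F = (\<Prod>i<p. [:- s - int i, 1:])"
  have "umbral_cong p (sbell_int s) 1 F"
    unfolding umbral_cong_def
  proof
    fix h
    have "[:int p:] dvd pcompose h [:int p, 1:] - pcompose h [:0, 1:]"
      using pcompose_diff_dvd[of "[:int p, 1:]" "[:0, 1:]" h] by simp
    then have "int p dvd umbral (sbell_int s) (pcompose h [:int p, 1:] - h)"
      by (auto elim!: dvdE simp: umbral_smult)
    then show "int p dvd umbral (sbell_int s) ((1 - F) * h)"
      by (simp add: F_def left_diff_distrib umbral_diff umbral_sbell_int_falling dvd_diff_commute)
  qed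
  also have "umbral_cong p (sbell_int s) F (Y ^ p - Y)"
  proof (rule umbral_cong_if_dvd)
    obtain k where "(\<Prod>i<p. [:- int i, 1:]) - (X ^ p - X) = [:int p:] * k"
      using falling_poly_cong_mod_prime[OF assms] unfolding X_def by (elim dvdE)
    then have "pcompose ((\<Prod>i<p. [:- int i, 1:]) - (X ^ p - X)) Y = [:int p:] * pcompose k Y"
      by (simp only: pcompose_mult pcompose_const)
    moreover have "pcompose (\<Prod>i<p. [:- int i, 1:]) Y = F"
      unfolding F_def Y_def pcompose_prod by (intro prod.cong) (simp_all add: pcompose_pCons)
    ultimately show "[:int p:] dvd F - (Y ^ p - Y)"
      by (simp add: X_def pcompose_diff pcompose_power pcompose_idL const_poly_dvd_iff)
  qed
  also have "umbral_cong p (sbell_int s) (Y ^ p - Y) (X ^ p - X)"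
  proof (rule umbral_cong_if_dvd)
    have "Y ^ p - Y - (X ^ p - X) = (X + [:- s:]) ^ p - (X ^ p + [:- s:])"
      by (simp add: X_def Y_def)
    then show "[:int p:] dvd Y ^ p - Y - (X ^ p - X)"
      by (simp only: prime_dvd_poly_power_add_const[OF assms])
  qed
  finally have "umbral_cong p (sbell_int s) (1 + X) (X ^ p - X + X)"
    by (intro umbral_cong_add umbral_cong_refl)
  then show ?thesis
    unfolding X_def by (simp add: add.commute umbral_cong_sym)
qed

lemma umbral_sbell_int_X_power_prime_power_cong:
  assumes "prime p"
  shows "umbral_cong p (sbell_int s) ([:0, 1:] ^ (p ^ k)) ([:0, 1:] + [:int k:])"
proof (induction k)
  case (Suc k)
  let ?X = "[:0, 1:] :: int poly"
  have "umbral_cong p (sbell_int s) ((?X ^ (p ^ k)) ^ p) ((?X + [:int k:]) ^ p)"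
    using Suc.IH by (rule umbral_cong_power)
  also have "umbral_cong p (sbell_int s) ((?X + [:int k:]) ^ p) (?X ^ p + [:int k:])"
    using prime_dvd_poly_power_add_const[OF assms] by (rule umbral_cong_if_dvd)
  also have "umbral_cong p (sbell_int s) (?X ^ p + [:int k:]) (?X + 1 + [:int k:])"
    by (intro umbral_cong_add umbral_cong_refl umbral_sbell_int_touchard assms)
  finally have "umbral_cong p (sbell_int s) ((?X ^ (p ^ k)) ^ p) (?X + 1 + [:int k:])" .
  moreover have "?X ^ (p ^ Suc k) = (?X ^ (p ^ k)) ^ p"
    by (simp only: power_Suc2 power_mult)
  moreover have "?X + 1 + [:int k:] = ?X + [:int (Suc k):]"
    by (simp add: one_pCons)
  ultimately show ?case
    by (simp only:)
qed (simp add: umbral_cong_refl)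

theorem proposition1:
  fixes p n r :: nat
  assumes "prime p"
  shows "sbell (n + p ^ r) (- int r) \<in> \<int> \<and> sbell n (- int r + 1) \<in> \<int> \<and>
         (\<exists>k::int. sbell (n + p ^ r) (- int r) - sbell n (- int r + 1) = of_int (int p * k))"
proof -
  define s where "s = - int r"
  let ?X = "[:0, 1:] :: int poly"
  have "?X + [:int r:] = [:- s, 1:]"
    by (simp add: s_def)
  then have "int p dvd umbral (sbell_int s) ((?X ^ (p ^ r) - [:- s, 1:]) * ?X ^ n)"
    using umbral_sbell_int_X_power_prime_power_cong[OF assms, of s r] unfolding umbral_cong_def by metis
  moreover have "(?X ^ (p ^ r) - [:- s, 1:]) * ?X ^ n = ?X ^ (p ^ r + n) - [:- s, 1:] * ?X ^ n"
    by (simp only: left_diff_distrib power_add)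
  ultimately have "int p dvd sbell_int s (p ^ r + n) - sbell_int (s + 1) n"
    by (simp only: umbral_diff umbral_X_power umbral_sbell_int_shift_X_power)
  then obtain k where "sbell_int s (p ^ r + n) - sbell_int (s + 1) n = int p * k"
    by (elim dvdE)
  then have "(of_int (sbell_int s (p ^ r + n) - sbell_int (s + 1) n) :: rat) = of_int (int p * k)"
    by (rule arg_cong)
  then have "sbell (n + p ^ r) s - sbell n (s + 1) = of_int (int p * k)"
    by (simp only: of_int_diff of_int_sbell_int add.commute[of "p ^ r"])
  then show ?thesis
    using sbell_in_Ints unfolding s_def by blast
qed

end
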